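(* In the setting of the context, Axiom (P3) holds for $\{d_a\mid a\in C\}$ with any $\theta\ge4\delta$: for any $b,c\in C$ the set $\{a\in C\setminus\{b,c\}: d_a(b,c)>\theta\}$ is finite.
   Context: $X$ is a $\delta$-hyperbolic geodesic metric space ($\delta>0$, every geodesic triangle $\delta$-thin). $G$ acts on $X$ by isometries and $\mathcal{C}=(C,\{G_c\})$ is a $\rho$-separated fairly rotating family with $\rho\ge20\delta$ (i.e. $C\subseteq X$ is $G$-invariant, $G_c$ fixes $c$, $G_{gc}=gG_cg^{-1}$, distinct points of $C$ are at distance $\ge\rho$, and for $c\in C$, $g\in G_c\setminus\{1\}$, $x\in C\setminus\{c\}$ some geodesic from $x$ to $gx$ meets the closed $1$-ball about $c$). Fix $2+2\delta\le R\le\frac\rho2-3\delta$; $B_r(p)$ denotes the open ball. For $p\in C$, $S_p=\{x:d(x,p)=R\}$ with metric $d_{S_p}(x,y)=$ infimum of lengths of paths from $x$ to $y$ in $X\setminus B_R(p)$ (possibly $\infty$). For $x\in C\setminus\{p\}$, $\pi_p(x)\subseteq S_p$ is the set of points where geodesics $[p,x]$ meet $S_p$, and $d_p(x,y)=\operatorname{diam}_{S_p}(\pi_p(x)\cup\pi_p(y))$. *)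

theory Defs
  imports "HOL-Analysis.Analysis" "HOL-Algebra.Group_Action" "HOL-Library.Extended_Real"
begin

definition geodesic_path :: "(real \<Rightarrow> 'a::metric_space) \<Rightarrow> 'a \<Rightarrow> 'a \<Rightarrow> bool" where
  "geodesic_path \<gamma> x y \<longleftrightarrow> \<gamma> 0 = x \<and> \<gamma> (dist x y) = y \<and>
     (\<forall>s\<in>{0..dist x y}. \<forall>t\<in>{0..dist x y}. dist (\<gamma> s) (\<gamma> t) = \<bar>s - t\<bar>)"

definition geod_seg :: "'a::metric_space \<Rightarrow> 'a \<Rightarrow> 'a set \<Rightarrow> bool" where
  "geod_seg x y S \<longleftrightarrow> (\<exists>\<gamma>. geodesic_path \<gamma> x y \<and> S = \<gamma> ` {0..dist x y})"

definition geodesic_space :: "'a::metric_space itself \<Rightarrow> bool" where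
  "geodesic_space _ \<longleftrightarrow> (\<forall>x y::'a. \<exists>\<gamma>. geodesic_path \<gamma> x y)"

definition gromov_product :: "'a::metric_space \<Rightarrow> 'a \<Rightarrow> 'a \<Rightarrow> real" where
  "gromov_product y z x = (dist x y + dist x z - dist y z) / 2"

(* tripod condition at vertex x, for sides A = [x,y] and B = [x,z] *)
definition thin_at :: "real \<Rightarrow> 'a::metric_space \<Rightarrow> 'a \<Rightarrow> 'a \<Rightarrow> 'a set \<Rightarrow> 'a set \<Rightarrow> bool" where
  "thin_at \<delta> x y z A B \<longleftrightarrow> (\<forall>p\<in>A. \<forall>q\<in>B.
      dist x p = dist x q \<and> dist x p \<le> gromov_product y z x \<longrightarrow> dist p q \<le> \<delta>)"

definition thin_triangle :: "real \<Rightarrow> 'a::metric_space \<Rightarrow> 'a \<Rightarrow> 'a \<Rightarrow> 'a set \<Rightarrow> 'a set \<Rightarrow> 'a set \<Rightarrow> bool" where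
  "thin_triangle \<delta> x y z Sxy Syz Szx \<longleftrightarrow>
     thin_at \<delta> x y z Sxy Szx \<and> thin_at \<delta> y z x Syz Sxy \<and> thin_at \<delta> z x y Szx Syz"

definition hyperbolic_geodesic :: "'a::metric_space itself \<Rightarrow> real \<Rightarrow> bool" where
  "hyperbolic_geodesic T \<delta> \<longleftrightarrow> geodesic_space T \<and>
     (\<forall>x y z::'a. \<forall>A B D. geod_seg x y A \<and> geod_seg y z B \<and> geod_seg z x D \<longrightarrow>
        thin_triangle \<delta> x y z A B D)"

definition isometric_action :: "('g, 'b) monoid_scheme \<Rightarrow> ('g \<Rightarrow> 'a::metric_space \<Rightarrow> 'a) \<Rightarrow> bool" where
  "isometric_action G \<phi> \<longleftrightarrow> group G \<and> group_action G UNIV \<phi> \<and>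
     (\<forall>g\<in>carrier G. \<forall>x y. dist (\<phi> g x) (\<phi> g y) = dist x y)"

definition fairly_rotating_family ::
  "('g, 'b) monoid_scheme \<Rightarrow> ('g \<Rightarrow> 'a::metric_space \<Rightarrow> 'a) \<Rightarrow> real \<Rightarrow> 'a set \<Rightarrow> ('a \<Rightarrow> 'g set) \<Rightarrow> bool" where
  "fairly_rotating_family G \<phi> \<rho> C Gc \<longleftrightarrow>
     (\<forall>g\<in>carrier G. \<forall>c\<in>C. \<phi> g c \<in> C) \<and>
     (\<forall>c\<in>C. subgroup (Gc c) G) \<and>
     (\<forall>c\<in>C. \<forall>g\<in>Gc c. \<phi> g c = c) \<and>
     (\<forall>g\<in>carrier G. \<forall>c\<in>C. Gc (\<phi> g c) = (\<lambda>h. g \<otimes>\<^bsub>G\<^esub> h \<otimes>\<^bsub>G\<^esub> inv\<^bsub>G\<^esub> g) ` Gc c) \<and>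
     (\<forall>c\<in>C. \<forall>c'\<in>C. c \<noteq> c' \<longrightarrow> dist c c' \<ge> \<rho>) \<and>
     (\<forall>c\<in>C. \<forall>g\<in>Gc c - {\<one>\<^bsub>G\<^esub>}. \<forall>x\<in>C - {c}.
        \<exists>S. geod_seg x (\<phi> g x) S \<and> S \<inter> cball c 1 \<noteq> {})"

definition path_length :: "(real \<Rightarrow> 'a::metric_space) \<Rightarrow> ereal" where
  "path_length \<gamma> = (SUP (n, t) \<in> {(n::nat, t::nat \<Rightarrow> real). t 0 = 0 \<and> t n = 1 \<and>
        (\<forall>i<n. t i \<le> t (Suc i))}.
      ereal (\<Sum>i<n. dist (\<gamma> (t i)) (\<gamma> (t (Suc i)))))"

(* induced path metric on S_p: infimum of lengths of paths in X \ B_R(p) (possibly infinity) *)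
definition sphere_dist :: "'a::metric_space \<Rightarrow> real \<Rightarrow> 'a \<Rightarrow> 'a \<Rightarrow> ereal" where
  "sphere_dist p R x y = (INF \<gamma> \<in> {\<gamma>. path \<gamma> \<and> pathstart \<gamma> = x \<and> pathfinish \<gamma> = y \<and>
        path_image \<gamma> \<subseteq> UNIV - ball p R}. path_length \<gamma>)"

definition proj :: "'a::metric_space \<Rightarrow> real \<Rightarrow> 'a \<Rightarrow> 'a set" where
  "proj p R x = {z. dist p z = R \<and> (\<exists>S. geod_seg p x S \<and> z \<in> S)}"

definition proj_dist :: "'a::metric_space \<Rightarrow> real \<Rightarrow> 'a \<Rightarrow> 'a \<Rightarrow> ereal" where
  "proj_dist p R x y = (SUP (u, v) \<in> (proj p R x \<union> proj p R y) \<times> (proj p R x \<union> proj p R y).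
      sphere_dist p R u v)"

end

theory Submission
  imports Defs
begin

text \<open>If the Gromov product \<open>(b|c)\<^sub>a\<close> is at least \<open>R + \<delta>\<close>, thinness of a triangle with vertex \<open>a\<close>
  makes geodesics \<open>[a,b]\<close> and \<open>[a,c]\<close> \<open>\<delta>\<close>-close at distance \<open>R + \<delta>\<close> from \<open>a\<close>; so the points where
  they cross \<open>S\<^sub>a\<close> are joined outside \<open>B\<^sub>R(a)\<close> by a detour of length \<open>3\<delta>\<close>, and \<open>d\<^sub>a(b,c) \<le> 3\<delta> < \<theta>\<close>.
  Hence every \<open>a\<close> with \<open>d\<^sub>a(b,c) > \<theta>\<close> has \<open>(b|c)\<^sub>a < R + \<delta>\<close> and therefore lies within \<open>R + 2\<delta>\<close>
  of a geodesic \<open>[b,c]\<close>. That geodesic is compact and \<open>C\<close> is \<open>\<rho>\<close>-separated with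
  \<open>\<rho> > 2(R + 2\<delta>)\<close>, so there are only finitely many such \<open>a\<close>.\<close>

lemma geodesic_path_dist:
  assumes "geodesic_path \<gamma> x y" "s \<in> {0..dist x y}" "t \<in> {0..dist x y}"
  shows "dist (\<gamma> s) (\<gamma> t) = \<bar>s - t\<bar>"
  using assms unfolding geodesic_path_def by blast

lemma geodesic_path_lipschitz:
  assumes "geodesic_path \<gamma> x y"
  shows "1-lipschitz_on {0..dist x y} \<gamma>"
  using geodesic_path_dist[OF assms] by (intro lipschitz_onI) (auto simp: dist_real_def)

lemma compact_geodesic_image:
  assumes "geodesic_path \<gamma> x y"
  shows "compact (\<gamma> ` {0..dist x y})"
  using lipschitz_on_continuous_on[OF geodesic_path_lipschitz[OF assms]]
  by (intro compact_continuous_image) auto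

lemma geodesic_path_dist_start:
  assumes "geodesic_path \<gamma> x y" "s \<in> {0..dist x y}"
  shows "dist x (\<gamma> s) = s"
proof -
  have "\<gamma> 0 = x" using assms(1) unfolding geodesic_path_def by simp
  then show ?thesis
    using geodesic_path_dist[OF assms(1) _ assms(2), of 0] assms(2) by simp
qed

lemma geodesic_path_dist_finish:
  assumes "geodesic_path \<gamma> x y" "s \<in> {0..dist x y}"
  shows "dist (\<gamma> s) y = dist x y - s"
proof -
  have "\<gamma> (dist x y) = y" using assms(1) unfolding geodesic_path_def by simp
  then show ?thesis
    using geodesic_path_dist[OF assms, of "dist x y"] assms(2) by simp
qed

lemma geod_seg_commute:
  assumes "geod_seg x y S"
  shows "geod_seg y x S"
proof -
  obtain \<gamma> where \<gamma>: "geodesic_path \<gamma> x y" and S: "S = \<gamma> ` {0..dist x y}"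
    using assms unfolding geod_seg_def by blast
  define \<gamma>' where "\<gamma>' s = \<gamma> (dist x y - s)" for s
  have "geodesic_path \<gamma>' y x"
    using \<gamma> unfolding geodesic_path_def \<gamma>'_def by (auto simp: dist_commute)
  moreover have "\<gamma>' ` {0..dist y x} = S"
  proof -
    have "(\<lambda>s. dist x y - s) ` {0..dist x y} = {0..dist x y}"
      by (auto intro: image_eqI[where x = "dist x y - _"])
    then show ?thesis
      unfolding S \<gamma>'_def by (metis dist_commute image_image)
  qed
  ultimately show ?thesis unfolding geod_seg_def by blast
qed

lemma proj_eq_geodesic_point:
  assumes "u \<in> proj a R y"
  obtains \<gamma> where "geodesic_path \<gamma> a y" "R \<in> {0..dist a y}" "u = \<gamma> R"
proof -
  obtain \<gamma> s where \<gamma>: "geodesic_path \<gamma> a y" and s: "s \<in> {0..dist a y}" "u = \<gamma> s"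
    and R: "dist a u = R"
    using assms unfolding proj_def geod_seg_def by blast
  have "s = R" using geodesic_path_dist_start[OF \<gamma> s(1)] s(2) R by simp
  with \<gamma> s show thesis by (intro that) auto
qed

lemma gromov_product_commute: "gromov_product y z x = gromov_product z y x"
  unfolding gromov_product_def by (simp add: dist_commute)

lemma gromov_product_nonneg: "0 \<le> gromov_product y z x"
  unfolding gromov_product_def using dist_triangle[of y z x] by (simp add: dist_commute)

lemma gromov_product_le_dist: "gromov_product y z x \<le> dist x y"
  unfolding gromov_product_def using dist_triangle[of x z y] by (simp add: dist_commute)

lemma gromov_product_self: "gromov_product y y x = dist x y"
  unfolding gromov_product_def by simp

lemma gromov_product_add: "gromov_product y z x + gromov_product z x y = dist x y"
  unfolding gromov_product_def by (simp add: dist_commute field_simps)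

lemma hyperbolic_geodesic_thin_vertex:
  fixes a y z :: "'a::metric_space"
  assumes hyp: "hyperbolic_geodesic TYPE('a) \<delta>"
    and \<gamma>: "geodesic_path \<gamma> a y" and \<eta>: "geodesic_path \<eta> a z"
    and s: "0 \<le> s" "s \<le> gromov_product y z a"
  shows "dist (\<gamma> s) (\<eta> s) \<le> \<delta>"
proof -
  obtain \<beta> where "geodesic_path \<beta> y z"
    using hyp unfolding hyperbolic_geodesic_def geodesic_space_def by blast
  then have "geod_seg y z (\<beta> ` {0..dist y z})" unfolding geod_seg_def by blast
  moreover have "geod_seg a y (\<gamma> ` {0..dist a y})" "geod_seg z a (\<eta> ` {0..dist a z})"
    using \<gamma> \<eta> geod_seg_commute unfolding geod_seg_def by blast+
  ultimately have "thin_at \<delta> a y z (\<gamma> ` {0..dist a y}) (\<eta> ` {0..dist a z})"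
    using hyp unfolding hyperbolic_geodesic_def thin_triangle_def by blast
  moreover have "s \<in> {0..dist a y}" "s \<in> {0..dist a z}"
    using s gromov_product_le_dist[of y z a] gromov_product_le_dist[of z y a]
    by (auto simp: gromov_product_commute[of z])
  ultimately show ?thesis
    using s geodesic_path_dist_start[OF \<gamma>] geodesic_path_dist_start[OF \<eta>]
    unfolding thin_at_def by auto
qed

lemma path_length_le_lipschitz:
  assumes "L-lipschitz_on {0..1} \<gamma>"
  shows "path_length \<gamma> \<le> ereal L"
  unfolding path_length_def
proof (rule SUP_least, clarsimp)
  fix n :: nat and t :: "nat \<Rightarrow> real"
  assume t0: "t 0 = 0" and tn: "t n = 1" and t_step: "\<forall>i<n. t i \<le> t (Suc i)"
  have mono: "t i \<le> t j" if "i \<le> j" "j \<le> n" for i j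
    using that
  proof (induction j rule: dec_induct)
    case (step k)
    then show ?case using t_step order_trans[of "t i" "t k" "t (Suc k)"] by (simp add: Suc_le_eq)
  qed simp
  have range: "t i \<in> {0..1}" if "i \<le> n" for i
    using mono[of 0 i] mono[of i n] that t0 tn by auto
  have "(\<Sum>i<n. dist (\<gamma> (t i)) (\<gamma> (t (Suc i)))) \<le> (\<Sum>i<n. L * (t (Suc i) - t i))"
  proof (rule sum_mono)
    fix i assume "i \<in> {..<n}"
    then show "dist (\<gamma> (t i)) (\<gamma> (t (Suc i))) \<le> L * (t (Suc i) - t i)"
      using lipschitz_onD[OF assms, of "t i" "t (Suc i)"] range[of i] range[of "Suc i"] t_step
      by (simp add: dist_real_def)
  qed
  also have "\<dots> = L * (t n - t 0)"
    by (simp add: sum_distrib_left[symmetric] sum_lessThan_telescope)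
  finally show "(\<Sum>i<n. dist (\<gamma> (t i)) (\<gamma> (t (Suc i)))) \<le> L"
    using t0 tn by simp
qed

lemma sphere_dist_le_lipschitz_path:
  fixes Q :: "real \<Rightarrow> 'a::metric_space"
  assumes lip: "L-lipschitz_on {0..T} Q" and "0 \<le> T"
    and outside: "\<And>t. t \<in> {0..T} \<Longrightarrow> R \<le> dist p (Q t)"
  shows "sphere_dist p R (Q 0) (Q T) \<le> ereal (L * T)"
proof -
  define P where "P u = Q (T * u)" for u
  have scale: "T-lipschitz_on {0..1} (\<lambda>u. T * u)"
    using \<open>0 \<le> T\<close> by (intro lipschitz_onI) (auto simp: dist_real_def abs_mult right_diff_distrib[symmetric])
  have into: "(\<lambda>u. T * u) ` {0..1} \<subseteq> {0..T}"
    using \<open>0 \<le> T\<close> by (auto intro: mult_left_le)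
  have P_lip: "(L * T)-lipschitz_on {0..1} P"
    unfolding P_def by (rule lipschitz_on_compose2[OF scale lipschitz_on_subset[OF lip into]])
  have "path P"
    unfolding path_def by (rule lipschitz_on_continuous_on[OF P_lip])
  moreover have "path_image P \<subseteq> UNIV - ball p R"
    using outside into unfolding path_image_def P_def by (force simp: ball_def not_less)
  ultimately have "sphere_dist p R (Q 0) (Q T) \<le> path_length P"
    unfolding sphere_dist_def by (intro INF_lower) (auto simp: P_def pathstart_def pathfinish_def)
  also have "\<dots> \<le> ereal (L * T)"
    by (rule path_length_le_lipschitz[OF P_lip])
  finally show ?thesis .
qed

lemma geodesic_path_affine_lipschitz:
  assumes "geodesic_path \<gamma> x y" and "\<And>t. t \<in> U \<Longrightarrow> b + c * t \<in> {0..dist x y}"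
  shows "\<bar>c\<bar>-lipschitz_on U (\<lambda>t. \<gamma> (b + c * t))"
proof (rule lipschitz_onI)
  fix s t assume "s \<in> U" "t \<in> U"
  then have "dist (\<gamma> (b + c * s)) (\<gamma> (b + c * t)) = \<bar>c * s - c * t\<bar>"
    using geodesic_path_dist[OF assms(1)] assms(2) by simp
  then show "dist (\<gamma> (b + c * s)) (\<gamma> (b + c * t)) \<le> \<bar>c\<bar> * dist s t"
    by (simp add: dist_real_def abs_mult right_diff_distrib[symmetric])
qed simp

lemma sphere_dist_le_detour:
  fixes a y z :: "'a::metric_space"
  assumes geo: "geodesic_space TYPE('a)"
    and \<gamma>: "geodesic_path \<gamma> a y" and \<eta>: "geodesic_path \<eta> a z"
    and "0 \<le> R" "0 \<le> h" "R + h \<le> dist a y" "R + h \<le> dist a z"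
    and close: "dist (\<gamma> (R + h)) (\<eta> (R + h)) \<le> h"
  shows "sphere_dist a R (\<gamma> R) (\<eta> R) \<le> ereal (3 * h)"
proof -
  define p q where "p = \<gamma> (R + h)" and "q = \<eta> (R + h)"
  obtain \<mu> where \<mu>: "geodesic_path \<mu> p q"
    using geo unfolding geodesic_space_def by blast
  define e where "e = dist p q"
  have "0 \<le> e" "e \<le> h" using close unfolding e_def p_def q_def by auto
  have \<mu>_ends: "\<mu> 0 = p" "\<mu> e = q"
    using \<mu> unfolding geodesic_path_def e_def by auto
  \<comment> \<open>Run out along \<open>\<gamma>\<close> to distance \<open>R + h\<close>, cross over to \<open>\<eta>\<close> along \<open>\<mu>\<close>, and run back in along \<open>\<eta>\<close>;
      each leg is \<open>h\<close>-Lipschitz on an interval of length 1. The parameters are written as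
      \<open>b + c * t\<close> to match geodesic_path_affine_lipschitz.\<close>
  define Q where "Q t = (if t \<le> 2 then if t \<le> 1 then \<gamma> (R + h * t) else \<mu> (- e + e * t)
    else \<eta> ((R + 3 * h) + (- h) * t))" for t
  have out_\<gamma>: "R + h * t \<in> {0..dist a y}" "R \<le> R + h * t" if "t \<in> {0..1}" for t
    using that \<open>0 \<le> R\<close> \<open>0 \<le> h\<close> \<open>R + h \<le> dist a y\<close> mult_left_le[of t h] by auto
  have across_\<mu>: "- e + e * t \<in> {0..dist p q}" "- e + e * t \<le> h" if "t \<in> {1..2}" for t
    using that \<open>0 \<le> e\<close> \<open>e \<le> h\<close> mult_left_mono[of t 2 e] mult_left_mono[of 1 t e]
    unfolding e_def by auto
  have in_\<eta>: "(R + 3 * h) + (- h) * t \<in> {0..dist a z}" "R \<le> (R + 3 * h) + (- h) * t"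
    if "t \<in> {2..3}" for t
    using that \<open>0 \<le> R\<close> \<open>0 \<le> h\<close> \<open>R + h \<le> dist a z\<close> mult_left_mono[of t 3 h] mult_left_mono[of 2 t h]
    by auto
  have "h-lipschitz_on {0..3} Q"
    unfolding Q_def
  proof (rule lipschitz_on_concat)
    show "h-lipschitz_on {0..2} (\<lambda>t. if t \<le> 1 then \<gamma> (R + h * t) else \<mu> (- e + e * t))"
    proof (rule lipschitz_on_concat)
      show "h-lipschitz_on {0..1} (\<lambda>t. \<gamma> (R + h * t))"
        using geodesic_path_affine_lipschitz[OF \<gamma>, of "{0..1}" R h] out_\<gamma>(1) \<open>0 \<le> h\<close> by simp
      show "h-lipschitz_on {1..2} (\<lambda>t. \<mu> (- e + e * t))"
        using geodesic_path_affine_lipschitz[OF \<mu>, of "{1..2}" "- e" e] across_\<mu>(1) \<open>0 \<le> e\<close> \<open>e \<le> h\<close>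
        by (auto intro: lipschitz_on_le)
    qed (simp add: \<mu>_ends p_def)
    show "h-lipschitz_on {2..3} (\<lambda>t. \<eta> ((R + 3 * h) + (- h) * t))"
      using geodesic_path_affine_lipschitz[OF \<eta>, of "{2..3}" "R + 3 * h" "- h"] in_\<eta>(1) \<open>0 \<le> h\<close> by simp
  qed (simp add: \<mu>_ends q_def add.commute)
  moreover have "R \<le> dist a (Q t)" if t: "t \<in> {0..3}" for t
  proof -
    consider "t \<in> {0..1}" | "t \<in> {1..2}" "\<not> t \<le> 1" | "t \<in> {2..3}" "\<not> t \<le> 2"
      using t by fastforce
    then show ?thesis
    proof cases
      case 1
      then show ?thesis using out_\<gamma> geodesic_path_dist_start[OF \<gamma>] by (auto simp: Q_def)
    next
      case 2
      have "dist a p \<le> dist a (\<mu> (- e + e * t)) + dist p (\<mu> (- e + e * t))"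
        by (metis dist_commute dist_triangle)
      moreover have "dist a p = R + h"
        using geodesic_path_dist_start[OF \<gamma>] out_\<gamma>[of 1] \<open>R + h \<le> dist a y\<close> \<open>0 \<le> R\<close> \<open>0 \<le> h\<close>
        unfolding p_def by simp
      moreover have "dist p (\<mu> (- e + e * t)) \<le> h"
        using across_\<mu>[OF 2(1)] geodesic_path_dist_start[OF \<mu>] by simp
      ultimately show ?thesis
        using 2 by (simp add: Q_def)
    next
      case 3
      then show ?thesis using in_\<eta> geodesic_path_dist_start[OF \<eta>] by (auto simp: Q_def)
    qed
  qed
  ultimately have "sphere_dist a R (Q 0) (Q 3) \<le> ereal (h * 3)"
    by (intro sphere_dist_le_lipschitz_path) auto
  then show ?thesis by (simp add: Q_def mult.commute)
qed

lemma sphere_dist_proj_le: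
  fixes a y z :: "'a::metric_space"
  assumes hyp: "hyperbolic_geodesic TYPE('a) \<delta>" and "0 \<le> \<delta>" "0 \<le> R"
    and u: "u \<in> proj a R y" and v: "v \<in> proj a R z"
    and far: "R + \<delta> \<le> gromov_product y z a"
  shows "sphere_dist a R u v \<le> ereal (3 * \<delta>)"
proof -
  obtain \<gamma> where \<gamma>: "geodesic_path \<gamma> a y" and u_eq: "u = \<gamma> R"
    using u by (rule proj_eq_geodesic_point)
  obtain \<eta> where \<eta>: "geodesic_path \<eta> a z" and v_eq: "v = \<eta> R"
    using v by (rule proj_eq_geodesic_point)
  have "R + \<delta> \<le> dist a y" "R + \<delta> \<le> dist a z"
    using far gromov_product_le_dist[of y z a] gromov_product_le_dist[of z y a]
    by (auto simp: gromov_product_commute[of z])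
  moreover have "dist (\<gamma> (R + \<delta>)) (\<eta> (R + \<delta>)) \<le> \<delta>"
    using hyperbolic_geodesic_thin_vertex[OF hyp \<gamma> \<eta>] far \<open>0 \<le> \<delta>\<close> \<open>0 \<le> R\<close> by simp
  moreover have "geodesic_space TYPE('a)"
    using hyp unfolding hyperbolic_geodesic_def by blast
  ultimately show ?thesis
    unfolding u_eq v_eq using sphere_dist_le_detour[OF _ \<gamma> \<eta>] \<open>0 \<le> \<delta>\<close> \<open>0 \<le> R\<close> by blast
qed

lemma proj_dist_le_of_gromov_product:
  fixes a b c :: "'a::metric_space"
  assumes hyp: "hyperbolic_geodesic TYPE('a) \<delta>" and "0 \<le> \<delta>" "0 \<le> R"
    and far: "R + \<delta> \<le> gromov_product b c a"
  shows "proj_dist a R b c \<le> ereal (3 * \<delta>)"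
  unfolding proj_dist_def
proof (rule SUP_least, clarify)
  fix u v assume "u \<in> proj a R b \<union> proj a R c" "v \<in> proj a R b \<union> proj a R c"
  then obtain y z where yz: "y \<in> {b, c}" "z \<in> {b, c}" "u \<in> proj a R y" "v \<in> proj a R z"
    by blast
  have "gromov_product b c a \<le> gromov_product y z a"
    using yz(1,2) gromov_product_le_dist[of b c a] gromov_product_le_dist[of c b a]
    by (auto simp: gromov_product_self gromov_product_commute[of c])
  then show "sphere_dist a R u v \<le> ereal (3 * \<delta>)"
    using sphere_dist_proj_le[OF hyp \<open>0 \<le> \<delta>\<close> \<open>0 \<le> R\<close> yz(3,4)] far by simp
qed

lemma geodesic_path_near_point:
  fixes a b c :: "'a::metric_space"
  assumes hyp: "hyperbolic_geodesic TYPE('a) \<delta>" and \<beta>: "geodesic_path \<beta> b c"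
  shows "\<exists>s\<in>{0..dist b c}. dist a (\<beta> s) \<le> gromov_product b c a + \<delta>"
proof -
  obtain \<alpha> where \<alpha>: "geodesic_path \<alpha> b a"
    using hyp unfolding hyperbolic_geodesic_def geodesic_space_def by blast
  define g where "g = gromov_product c a b"
  have g: "g \<in> {0..dist b c}" "g \<in> {0..dist b a}"
    using gromov_product_nonneg[of c a b] gromov_product_le_dist[of c a b]
      gromov_product_le_dist[of a c b]
    by (auto simp: g_def gromov_product_commute[of a])
  have "dist (\<beta> g) (\<alpha> g) \<le> \<delta>"
    using hyperbolic_geodesic_thin_vertex[OF hyp \<beta> \<alpha>] g by (simp add: g_def)
  moreover have "dist (\<alpha> g) a = gromov_product b c a"
    using geodesic_path_dist_finish[OF \<alpha> g(2)] gromov_product_add[of b c a]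
    by (simp add: g_def dist_commute)
  ultimately have "dist a (\<beta> g) \<le> gromov_product b c a + \<delta>"
    using dist_triangle[of a "\<beta> g" "\<alpha> g"] by (simp add: dist_commute)
  with g show ?thesis by blast
qed

lemma finite_if_separated_near_compact:
  fixes A K :: "'a::metric_space set"
  assumes "compact K" and near: "\<And>a. a \<in> A \<Longrightarrow> \<exists>k\<in>K. dist a k < D"
    and sep: "\<And>a a'. a \<in> A \<Longrightarrow> a' \<in> A \<Longrightarrow> a \<noteq> a' \<Longrightarrow> \<rho> \<le> dist a a'"
    and "2 * D < \<rho>"
  shows "finite A"
proof -
  have "0 < \<rho> / 2 - D" using \<open>2 * D < \<rho>\<close> by simp
  then obtain F where "finite F" and F: "K \<subseteq> (\<Union>x\<in>F. ball x (\<rho> / 2 - D))"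
    using seq_compact_imp_totally_bounded[OF compact_imp_seq_compact[OF \<open>compact K\<close>]] by blast
  have cover: "A \<subseteq> (\<Union>x\<in>F. A \<inter> ball x (\<rho> / 2))"
  proof
    fix a assume "a \<in> A"
    then obtain k where "k \<in> K" and a_k: "dist a k < D"
      using near by blast
    then obtain x where "x \<in> F" and x_k: "dist x k < \<rho> / 2 - D"
      using F by auto
    have "dist x a \<le> dist x k + dist k a" by (rule dist_triangle)
    then have "dist x a < \<rho> / 2"
      using a_k x_k dist_commute[of k a] by linarith
    with \<open>a \<in> A\<close> \<open>x \<in> F\<close> show "a \<in> (\<Union>x\<in>F. A \<inter> ball x (\<rho> / 2))" by auto
  qed
  have "finite (A \<inter> ball x (\<rho> / 2))" for x
  proof (cases "A \<inter> ball x (\<rho> / 2) = {}")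
    case False
    then obtain a where a: "a \<in> A \<inter> ball x (\<rho> / 2)" by blast
    have "a' = a" if "a' \<in> A \<inter> ball x (\<rho> / 2)" for a'
    proof (rule ccontr)
      assume "a' \<noteq> a"
      then have "\<rho> \<le> dist a' a" using sep a that by blast
      moreover have "dist a' a < \<rho>"
        using dist_triangle[of a' a x] a that by (simp add: dist_commute)
      ultimately show False by simp
    qed
    then have "A \<inter> ball x (\<rho> / 2) \<subseteq> {a}" by blast
    then show ?thesis by (rule finite_subset) simp
  qed simp
  then have "finite (\<Union>x\<in>F. A \<inter> ball x (\<rho> / 2))"
    using \<open>finite F\<close> by (intro finite_UN_I)
  then show ?thesis using cover by (rule finite_subset[rotated])
qed


theorem lemma3p6:
  fixes G :: "('g, 'b) monoid_scheme" and \<phi> :: "'g \<Rightarrow> 'a::metric_space \<Rightarrow> 'a"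
    and C :: "'a set" and Gc :: "'a \<Rightarrow> 'g set"
    and \<delta> \<rho> R \<theta> :: real
  assumes "\<delta> > 0"
    and "hyperbolic_geodesic TYPE('a) \<delta>"
    and "isometric_action G \<phi>"
    and "fairly_rotating_family G \<phi> \<rho> C Gc"
    and "\<rho> \<ge> 20 * \<delta>"
    and "2 + 2 * \<delta> \<le> R" and "R \<le> \<rho> / 2 - 3 * \<delta>"
    and "\<theta> \<ge> 4 * \<delta>"
    and "b \<in> C" and "c \<in> C"
  shows "finite {a \<in> C - {b, c}. proj_dist a R b c > ereal \<theta>}"
proof -
  have hyp: "hyperbolic_geodesic TYPE('a) \<delta>" by fact
  then obtain \<beta> where \<beta>: "geodesic_path \<beta> b c"
    unfolding hyperbolic_geodesic_def geodesic_space_def by blast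
  have near: "\<exists>k\<in>\<beta> ` {0..dist b c}. dist a k < R + 2 * \<delta>"
    if "proj_dist a R b c > ereal \<theta>" for a
  proof -
    have "\<not> R + \<delta> \<le> gromov_product b c a"
    proof
      assume "R + \<delta> \<le> gromov_product b c a"
      then have "proj_dist a R b c \<le> ereal (3 * \<delta>)"
        using proj_dist_le_of_gromov_product[OF hyp] assms(1,6) by simp
      with that have "ereal \<theta> < ereal (3 * \<delta>)" by (rule less_le_trans)
      then show False using assms(1,8) by simp
    qed
    moreover obtain s where "s \<in> {0..dist b c}" "dist a (\<beta> s) \<le> gromov_product b c a + \<delta>"
      using geodesic_path_near_point[OF hyp \<beta>] by blast
    ultimately show ?thesis by force
  qed
  show ?thesis
  proof (rule finite_if_separated_near_compact)
    show "compact (\<beta> ` {0..dist b c})" using \<beta> by (rule compact_geodesic_image)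
    show "2 * (R + 2 * \<delta>) < \<rho>" using assms(1,7) by simp
  qed (use near assms(4) in \<open>auto simp: fairly_rotating_family_def\<close>)
qed

end
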